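(* Let $n\in\mathbb N$, let $p$ be a prime number, let $m$ be a positive integer, and let $x\in\mathbb Z_n\times\mathbb Z_n$ have order $\operatorname{ord}(x)=p^m$ in the group $\mathbb Z_n\times\mathbb Z_n$. Let $A\subseteq\mathbb Z_n\times\mathbb Z_n$. If $\widehat{\mathbf 1}_A^{sym}(x)=0$, then $$|A\cap\langle px\rangle^{\perp_s}|=p\cdot|A\cap\langle x\rangle^{\perp_s}|.$$
   Context: $\mathbb Z_n$ is the additive cyclic group of order $n$. For $x=(x_1,x_2),y=(y_1,y_2)\in\mathbb Z_n\times\mathbb Z_n$ the symplectic form is $\langle x,y\rangle_s=x_1y_2-x_2y_1\in\mathbb Z_n$. For $A\subseteq\mathbb Z_n\times\mathbb Z_n$ the discrete symplectic Fourier transform of its indicator is $\widehat{\mathbf 1}_A^{sym}(\xi)=\sum_{a\in A}e^{\frac{2\pi i}{n}\langle a,\xi\rangle_s}$. For $x\in\mathbb Z_n\times\mathbb Z_n$, $\langle x\rangle$ denotes the cyclic subgroup generated by $x$. For $H\subseteq\mathbb Z_n\times\mathbb Z_n$, the symplectic orthogonal set is $H^{\perp_s}=\{g\in\mathbb Z_n\times\mathbb Z_n:\langle g,h\rangle_s=0\ \forall h\in H\}$. *)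

theory Defs
  imports Complex_Main "HOL-Computational_Algebra.Primes"
begin

definition zn2 :: "nat \<Rightarrow> (int \<times> int) set" where
  "zn2 n = {0..<int n} \<times> {0..<int n}"

definition zn2_smult :: "nat \<Rightarrow> int \<Rightarrow> int \<times> int \<Rightarrow> int \<times> int" where
  "zn2_smult n k x = ((k * fst x) mod int n, (k * snd x) mod int n)"

definition zn2_ord :: "nat \<Rightarrow> int \<times> int \<Rightarrow> nat" where
  "zn2_ord n x = (LEAST k::nat. 0 < k \<and> zn2_smult n (int k) x = (0, 0))"

definition symp :: "nat \<Rightarrow> int \<times> int \<Rightarrow> int \<times> int \<Rightarrow> int" where
  "symp n x y = (fst x * snd y - snd x * fst y) mod int n"

definition cyc :: "nat \<Rightarrow> int \<times> int \<Rightarrow> (int \<times> int) set" where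
  "cyc n x = {zn2_smult n k x | k. True}"

definition sperp :: "nat \<Rightarrow> (int \<times> int) set \<Rightarrow> (int \<times> int) set" where
  "sperp n H = {g \<in> zn2 n. \<forall>h\<in>H. symp n g h = 0}"

definition sym_fourier :: "nat \<Rightarrow> (int \<times> int) set \<Rightarrow> int \<times> int \<Rightarrow> complex" where
  "sym_fourier n A \<xi> = (\<Sum>a\<in>A. exp (2 * pi * \<i> * of_int (symp n a \<xi>) / of_nat n))"

end

theory Submission
  imports Defs "HOL-Computational_Algebra.Polynomial_Factorial"
begin

(* Let N = p^m be the order of x. Since N x = 0, every value <a, x>_s is (n / N) j(a) for some
   0 <= j(a) < N; then a is orthogonal to x iff j(a) = 0, a is orthogonal to p x iff
   p^(m-1) divides j(a), and the Fourier coefficient at x is the sum of w^j(a) over a in A, where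
   w is a primitive N-th root of unity. Its vanishing means that w is a root of the integer
   polynomial with coefficients c_j = #{a in A. j(a) = j}, j < N. The cyclotomic polynomial
   Phi_N(X) = sum_{v<p} X^(v p^(m-1)) is irreducible (Eisenstein at p after X -> X + 1), hence
   divides it, and the quotient has degree < p^(m-1). So c is p^(m-1)-periodic, and
   card (A inter <p x>^perp) = sum_{v<p} c_(v p^(m-1)) = p c_0 = p card (A inter <x>^perp). *)

definition cong_dvd :: "'a::comm_ring_1 \<Rightarrow> 'a \<Rightarrow> 'a \<Rightarrow> bool" where
  "cong_dvd d a b \<longleftrightarrow> d dvd a - b"

lemma cong_dvd_refl: "cong_dvd d a a"
  by (simp add: cong_dvd_def)

lemma cong_dvd_trans [trans]: "cong_dvd d a b \<Longrightarrow> cong_dvd d b c \<Longrightarrow> cong_dvd d a c"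
  unfolding cong_dvd_def by (metis dvd_add diff_add_eq add_diff_cancel_left' diff_add_cancel)

lemma cong_dvd_diff: "cong_dvd d a b \<Longrightarrow> cong_dvd d a' b' \<Longrightarrow> cong_dvd d (a - a') (b - b')"
  unfolding cong_dvd_def by (metis dvd_diff diff_diff_eq add_diff_eq diff_add_eq diff_diff_eq2)

lemma cong_dvd_mult: "cong_dvd d a b \<Longrightarrow> cong_dvd d a' b' \<Longrightarrow> cong_dvd d (a * a') (b * b')"
proof -
  assume "cong_dvd d a b" "cong_dvd d a' b'"
  then have "d dvd (a - b) * a' + b * (a' - b')"
    unfolding cong_dvd_def by simp
  then show ?thesis
    unfolding cong_dvd_def by (simp add: algebra_simps)
qed

lemma cong_dvd_power: "cong_dvd d a b \<Longrightarrow> cong_dvd d (a ^ k) (b ^ k)"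
  by (induction k) (auto simp: cong_dvd_refl cong_dvd_mult)

lemma cong_dvd_sum:
  "(\<And>i. i \<in> I \<Longrightarrow> cong_dvd d (f i) (g i)) \<Longrightarrow> cong_dvd d (sum f I) (sum g I)"
  unfolding cong_dvd_def by (simp add: sum_subtractf[symmetric] dvd_sum)

lemma frobenius_cong:
  fixes a b :: "'a::comm_ring_1"
  assumes "prime p"
  shows "cong_dvd (of_nat p) ((a + b) ^ p) (a ^ p + b ^ p)"
proof -
  have "(a + b) ^ p = (\<Sum>k\<le>p. of_nat (p choose k) * a ^ k * b ^ (p - k))"
    by (simp add: binomial_ring)
  also have "cong_dvd (of_nat p) \<dots>
      (\<Sum>k\<le>p. (if k = p then a ^ p else 0) + (if k = 0 then b ^ p else 0))"
  proof (rule cong_dvd_sum)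
    fix k assume "k \<in> {..p}"
    show "cong_dvd (of_nat p) (of_nat (p choose k) * a ^ k * b ^ (p - k))
        ((if k = p then a ^ p else 0) + (if k = 0 then b ^ p else 0))"
    proof (cases "k = 0 \<or> k = p")
      case True
      then show ?thesis using assms by (auto simp: cong_dvd_refl prime_gt_0_nat)
    next
      case False
      then have "p dvd p choose k"
        using \<open>k \<in> {..p}\<close> assms by (intro dvd_choose_prime) auto
      then obtain c where "p choose k = p * c" ..
      then show ?thesis
        using False by (simp add: cong_dvd_def mult.assoc)
    qed
  qed
  finally show ?thesis
    by (simp add: sum.distrib)
qed

lemma frobenius_cong_iterated:
  fixes a b :: "'a::comm_ring_1"
  assumes "prime p"
  shows "cong_dvd (of_nat p) ((a + b) ^ p ^ k) (a ^ p ^ k + b ^ p ^ k)"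
proof (induction k)
  case 0
  show ?case by (simp add: cong_dvd_refl)
next
  case (Suc k)
  have "cong_dvd (of_nat p) (((a + b) ^ p ^ k) ^ p) ((a ^ p ^ k + b ^ p ^ k) ^ p)"
    using Suc.IH by (rule cong_dvd_power)
  also have "cong_dvd (of_nat p) \<dots> ((a ^ p ^ k) ^ p + (b ^ p ^ k) ^ p)"
    using assms by (rule frobenius_cong)
  finally show ?case
    by (simp add: power_mult[symmetric] mult.commute)
qed

(* For prime p this is the cyclotomic polynomial of order p^(k+1). *)
definition pp_cyclotomic :: "nat \<Rightarrow> nat \<Rightarrow> int poly" where
  "pp_cyclotomic p k = (\<Sum>v<p. monom 1 (v * p ^ k))"

lemma coeff_pp_cyclotomic:
  assumes "p > 0"
  shows "coeff (pp_cyclotomic p k) i = (if p ^ k dvd i \<and> i div p ^ k < p then 1 else 0)"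
proof -
  have "coeff (pp_cyclotomic p k) i = (\<Sum>v<p. if v = i div p ^ k \<and> p ^ k dvd i then 1 else 0)"
    using assms by (auto simp: pp_cyclotomic_def coeff_sum coeff_monom intro!: sum.cong)
  then show ?thesis
    by (cases "p ^ k dvd i") simp_all
qed

lemma degree_pp_cyclotomic:
  assumes "p > 0"
  shows "degree (pp_cyclotomic p k) = (p - 1) * p ^ k"
proof (rule antisym)
  show "degree (pp_cyclotomic p k) \<le> (p - 1) * p ^ k"
  proof (rule degree_le, intro allI impI)
    fix i assume i: "(p - 1) * p ^ k < i"
    have "i div p ^ k \<ge> p" if "p ^ k dvd i"
      using i that assms by (auto elim!: dvdE simp: mult.commute)
    then show "coeff (pp_cyclotomic p k) i = 0"
      using assms by (auto simp: coeff_pp_cyclotomic)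
  qed
  show "(p - 1) * p ^ k \<le> degree (pp_cyclotomic p k)"
    using assms by (intro le_degree) (simp add: coeff_pp_cyclotomic)
qed

lemma monic_pp_cyclotomic:
  assumes "p > 0"
  shows "lead_coeff (pp_cyclotomic p k) = 1"
  using assms by (simp add: degree_pp_cyclotomic coeff_pp_cyclotomic)

lemma pp_cyclotomic_shift_cong:
  assumes p: "prime p"
  shows "cong_dvd (of_nat p) (pcompose (pp_cyclotomic p k) [:1, 1:]) (monom 1 ((p - 1) * p ^ k))"
proof -
  define X :: "int poly" where "X = monom 1 1"
  define Y :: "int poly" where "Y = monom 1 (p ^ k)"
  have "pcompose (monom 1 d) [:1, 1:] = (X + 1) ^ d" for d
    by (induction d) (simp_all add: X_def monom_Suc pcompose_pCons one_pCons monom_altdef)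
  then have "pcompose (pp_cyclotomic p k) [:1, 1:] = (\<Sum>v<p. ((X + 1) ^ p ^ k) ^ v)"
    by (simp add: pp_cyclotomic_def pcompose_sum mult.commute flip: power_mult)
  also have "cong_dvd (of_nat p) \<dots> (\<Sum>v<p. (Y + 1) ^ v)"
    using frobenius_cong_iterated[OF p, of X 1 k]
    by (intro cong_dvd_sum cong_dvd_power) (simp add: X_def Y_def monom_power)
  also have "cong_dvd (of_nat p) \<dots> (Y ^ (p - 1))"
  proof -
    define S where "S = (\<Sum>v<p. (Y + 1) ^ v)"
    have "Y * S = (Y + 1) ^ p - 1"
      using power_diff_1_eq[of "Y + 1" p] by (simp add: S_def)
    also have "cong_dvd (of_nat p) \<dots> (Y ^ p + 1 - 1)"
      using frobenius_cong[OF p, of Y 1] by (intro cong_dvd_diff cong_dvd_refl) simp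
    also have "Y ^ p + 1 - 1 = Y * Y ^ (p - 1)"
      using p by (simp add: power_eq_if prime_gt_0_nat)
    finally have "[:int p:] dvd Y * (S - Y ^ (p - 1))"
      by (simp add: cong_dvd_def right_diff_distrib of_nat_poly)
    moreover have "\<not> [:int p:] dvd Y"
      using p by (auto simp: Y_def const_poly_dvd_iff dest: spec[of _ "p ^ k"])
    ultimately have "[:int p:] dvd S - Y ^ (p - 1)"
      using p by (simp add: prime_elem_dvd_mult_iff prime_elem_const_poly_iff)
    then show ?thesis
      by (simp add: cong_dvd_def S_def of_nat_poly)
  qed
  finally show ?thesis
    by (simp add: Y_def monom_power mult.commute)
qed

lemma eisenstein_factor_degree_0:
  fixes A B :: "int poly" and P :: int
  assumes "prime P" and "F \<noteq> 0" and F: "A * B = F"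
    and coeffs: "\<forall>i<degree F. P dvd coeff F i"
    and "\<not> P dvd lead_coeff A" and "\<not> P dvd coeff B 0"
  shows "degree B = 0"
proof -
  define k where "k = (LEAST k. \<not> P dvd coeff A k)"
  have k: "\<not> P dvd coeff A k" "k \<le> degree A"
    unfolding k_def using assms(5) by (fact LeastI, fact Least_le)
  have below_k: "P dvd coeff A i" if "i < k" for i
    using not_less_Least[OF that[unfolded k_def]] by simp
  have "coeff F k = (\<Sum>i<k. coeff A i * coeff B (k - i)) + coeff A k * coeff B 0"
    by (simp add: F[symmetric] coeff_mult lessThan_Suc_atMost[symmetric])
  moreover have "P dvd (\<Sum>i<k. coeff A i * coeff B (k - i))"
    by (intro dvd_sum) (simp add: below_k)
  moreover have "\<not> P dvd coeff A k * coeff B 0"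
    using assms(1,6) k by (simp add: prime_dvd_mult_iff)
  ultimately have "\<not> P dvd coeff F k"
    by (simp add: dvd_add_right_iff)
  then have "degree F \<le> k"
    using coeffs by (meson not_le)
  moreover have "degree F = degree A + degree B"
    using assms(2) by (auto simp: F[symmetric] degree_mult_eq)
  ultimately show ?thesis
    using k by simp
qed

lemma eisenstein_irreducible:
  fixes F :: "int poly" and P :: int
  assumes "prime P" and monic: "lead_coeff F = 1" and "degree F > 0"
    and coeffs: "\<forall>i<degree F. P dvd coeff F i" and "\<not> P ^ 2 dvd coeff F 0"
  shows "irreducible F"
proof (rule irreducibleI)
  show "F \<noteq> 0" and "\<not> is_unit F"
    using \<open>degree F > 0\<close> by (auto simp: is_unit_poly_iff)
next
  fix A B assume F: "F = A * B"
  have F0: "F \<noteq> 0"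
    using \<open>degree F > 0\<close> by auto
  have "lead_coeff A * lead_coeff B = 1"
    using monic by (simp add: F lead_coeff_mult)
  then have units: "is_unit (lead_coeff A)" "is_unit (lead_coeff B)"
    by (metis dvd_triv_left, metis dvd_triv_right)
  then have lc_not_dvd: "\<not> P dvd lead_coeff A" "\<not> P dvd lead_coeff B"
    using \<open>prime P\<close> by (auto dest: dvd_unit_imp_unit simp: not_prime_unit)
  have const_unit: "is_unit C" if "degree C = 0" "is_unit (lead_coeff C)" for C :: "int poly"
    using that by (auto elim!: degree_eq_zeroE simp: is_unit_const_poly_iff)
  have c0: "coeff A 0 * coeff B 0 = coeff F 0"
    by (simp add: F coeff_mult)
  have "\<not> (P dvd coeff A 0 \<and> P dvd coeff B 0)"
  proof
    assume "P dvd coeff A 0 \<and> P dvd coeff B 0"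
    then have "P ^ 2 dvd coeff A 0 * coeff B 0"
      by (simp add: power2_eq_square mult_dvd_mono)
    with c0 \<open>\<not> P ^ 2 dvd coeff F 0\<close> show False by simp
  qed
  then consider "\<not> P dvd coeff A 0" | "\<not> P dvd coeff B 0"
    by blast
  then show "is_unit A \<or> is_unit B"
  proof cases
    case 1
    have "degree A = 0"
      by (rule eisenstein_factor_degree_0[OF \<open>prime P\<close> F0 _ coeffs lc_not_dvd(2) 1])
        (simp add: F)
    then show ?thesis using const_unit units by blast
  next
    case 2
    have "degree B = 0"
      by (rule eisenstein_factor_degree_0[OF \<open>prime P\<close> F0 _ coeffs lc_not_dvd(1) 2])
        (simp add: F)
    then show ?thesis using const_unit units by blast
  qed
qed

lemma irreducible_if_irreducible_pcompose:
  fixes f q :: "'a::idom_divide poly"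
  assumes irr: "irreducible (pcompose f q)" and "degree q = 1"
  shows "irreducible f"
proof (rule irreducibleI)
  have unit_if: "is_unit a" if "is_unit (pcompose a q)" for a
  proof -
    have "degree a = degree (pcompose a q)"
      using \<open>degree q = 1\<close> by (simp add: degree_pcompose)
    also have "\<dots> = 0"
      using that by (auto simp: is_unit_poly_iff)
    finally show ?thesis
      using that by (auto elim!: degree_eq_zeroE)
  qed
  show "f \<noteq> 0"
    using irr by auto
  show "\<not> is_unit f"
    using irr by (auto simp: is_unit_poly_iff irreducible_def)
  fix a b assume "f = a * b"
  then have "pcompose f q = pcompose a q * pcompose b q"
    by (simp add: pcompose_mult)
  then show "is_unit a \<or> is_unit b"
    using irr unit_if by (auto dest: irreducibleD)
qed

lemma pp_cyclotomic_irreducible: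
  assumes p: "prime p"
  shows "irreducible (pp_cyclotomic p k)"
proof -
  define F where "F = pcompose (pp_cyclotomic p k) [:1, 1:]"
  have "p > 1"
    using p by (rule prime_gt_1_nat)
  then have deg: "degree F = (p - 1) * p ^ k"
    by (simp add: F_def degree_pcompose degree_pp_cyclotomic)
  have "lead_coeff F = 1"
    using monic_pp_cyclotomic[of p k] \<open>p > 1\<close> by (simp add: F_def lead_coeff_comp)
  moreover have "degree F > 0"
    using \<open>p > 1\<close> by (simp add: deg)
  moreover have "int p dvd coeff F i" if "i < degree F" for i
  proof -
    have "int p dvd coeff (F - monom 1 ((p - 1) * p ^ k)) i"
      using pp_cyclotomic_shift_cong[OF p, of k]
      by (simp add: F_def cong_dvd_def of_nat_poly const_poly_dvd_iff)
    then show ?thesis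
      using that by (simp add: deg)
  qed
  moreover have "coeff F 0 = int p"
    by (simp add: F_def poly_0_coeff_0[symmetric] poly_pcompose pp_cyclotomic_def poly_sum poly_monom)
  moreover have "\<not> int p ^ 2 dvd int p"
    using \<open>p > 1\<close> by (simp add: power2_eq_square)
  ultimately have "irreducible F"
    using p by (intro eisenstein_irreducible[of "int p"]) auto
  then show ?thesis
    unfolding F_def by (rule irreducible_if_irreducible_pcompose) simp
qed

lemma map_poly_of_int_add:
  "map_poly (of_int :: int \<Rightarrow> 'a::comm_ring_1) (f + g) = map_poly of_int f + map_poly of_int g"
  by (rule poly_eqI) (simp add: coeff_map_poly)

lemma map_poly_of_int_mult:
  "map_poly (of_int :: int \<Rightarrow> 'a::comm_ring_1) (f * g) = map_poly of_int f * map_poly of_int g"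
  by (rule poly_eqI) (simp add: coeff_map_poly coeff_mult of_int_sum)

lemma map_poly_of_int_sum:
  "map_poly (of_int :: int \<Rightarrow> 'a::comm_ring_1) (sum f A) = (\<Sum>a\<in>A. map_poly of_int (f a))"
  by (rule poly_eqI) (simp add: coeff_map_poly coeff_sum of_int_sum)

lemma prime_poly_degree_le_if_common_root:
  fixes \<Phi> g :: "int poly" and z :: "'a::{idom, ring_char_0}"
  assumes \<Phi>: "prime_elem \<Phi>" "poly (map_poly of_int \<Phi>) z = 0"
    and g: "g \<noteq> 0" "poly (map_poly of_int g) z = 0"
  shows "degree \<Phi> \<le> degree g"
  using g
proof (induction "degree g" arbitrary: g rule: less_induct)
  case less
  obtain q r where qr: "pseudo_divmod \<Phi> g = (q, r)"
    by fastforce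
  define c where "c = lead_coeff g ^ (Suc (degree \<Phi>) - degree g)"
  have division: "smult c \<Phi> = g * q + r" and r: "r = 0 \<or> degree r < degree g"
    using pseudo_divmod[OF \<open>g \<noteq> 0\<close> qr] by (simp_all add: c_def)
  have "c \<noteq> 0"
    using \<open>g \<noteq> 0\<close> by (simp add: c_def)
  have "poly (map_poly of_int r) z = 0"
    using arg_cong[OF division, of "\<lambda>h. poly (map_poly of_int h) z"] \<Phi>(2) less.prems(2)
    by (simp add: map_poly_of_int_add map_poly_of_int_mult map_poly_smult)
  show ?case
  proof (cases "r = 0")
    case False
    then have "degree \<Phi> \<le> degree r"
      using r less.hyps \<open>poly (map_poly of_int r) z = 0\<close> by blast
    then show ?thesis
      using r False by simp
  next
    case True
    then have "\<Phi> dvd g * q"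
      using division by (metis add_0_right dvd_smult dvd_refl)
    then consider "\<Phi> dvd g" | "\<Phi> dvd q"
      using \<Phi>(1) by (auto simp: prime_elem_dvd_mult_iff)
    then show ?thesis
    proof cases
      case 1
      then show ?thesis
        using \<open>g \<noteq> 0\<close> by (rule dvd_imp_degree_le)
    next
      case 2
      then obtain s where "q = \<Phi> * s" ..
      then have "[:c:] * \<Phi> = (g * s) * \<Phi>"
        using division True by (simp add: mult_ac)
      then have "g * s = [:c:]"
        using \<Phi>(1) mult_right_cancel[of \<Phi> "g * s" "[:c:]"] by (auto simp: prime_elem_def)
      then have "degree g = 0"
        using \<open>c \<noteq> 0\<close> by (metis degree_mult_eq degree_pCons_0 mult_zero_right pCons_eq_0_iff
            add_is_0)
      then obtain a where "g = [:a:]"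
        by (elim degree_eq_zeroE)
      then show ?thesis
        using less.prems by (simp add: map_poly_pCons)
    qed
  qed
qed

lemma monic_prime_poly_dvd_if_common_root:
  fixes \<Phi> f :: "int poly" and z :: "'a::{idom, ring_char_0}"
  assumes "prime_elem \<Phi>" "lead_coeff \<Phi> = 1" "poly (map_poly of_int \<Phi>) z = 0"
    and "poly (map_poly of_int f) z = 0"
  shows "\<Phi> dvd f"
proof -
  have "\<Phi> \<noteq> 0"
    using assms(2) by auto
  obtain q r where qr: "pseudo_divmod f \<Phi> = (q, r)"
    by fastforce
  have division: "f = \<Phi> * q + r" and r: "r = 0 \<or> degree r < degree \<Phi>"
    using pseudo_divmod[OF \<open>\<Phi> \<noteq> 0\<close> qr] assms(2) by simp_all
  have "poly (map_poly of_int r) z = 0"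
    using arg_cong[OF division, of "\<lambda>h. poly (map_poly of_int h) z"] assms(3,4)
    by (simp add: map_poly_of_int_add map_poly_of_int_mult)
  then have "r = 0"
    using r prime_poly_degree_le_if_common_root[OF assms(1,3)] by fastforce
  then show ?thesis
    using division by simp
qed

lemma exp_2pi_i_div_neq_1:
  assumes "n \<ge> 2"
  shows "exp (2 * pi * \<i> / of_nat n) \<noteq> 1"
proof
  assume "exp (2 * pi * \<i> / of_nat n) = 1"
  then have "cos (2 * pi / n) = 1"
    using Re_exp[of "2 * pi * \<i> / of_nat n"] by simp
  then obtain k :: int where "2 * pi / n = k * 2 * pi"
    by (auto simp: cos_one_2pi_int)
  then have "real_of_int (k * int n) = 1"
    using assms by (simp add: field_simps)
  then have "int n dvd 1"
    by (metis dvd_triv_right of_int_eq_1_iff)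
  then show False
    using assms by simp
qed

lemma pp_cyclotomic_root:
  assumes "prime p"
  shows "poly (map_poly of_int (pp_cyclotomic p k)) (exp (2 * pi * \<i> / of_nat (p ^ Suc k))) = 0"
proof -
  define \<zeta> where "\<zeta> = exp (2 * pi * \<i> / of_nat p)"
  have "p > 0"
    using assms by (simp add: prime_gt_0_nat)
  have "exp (2 * pi * \<i> / of_nat (p ^ Suc k)) ^ (v * p ^ k) = \<zeta> ^ v" for v
    using \<open>p > 0\<close> by (simp add: \<zeta>_def flip: exp_of_nat_mult) (simp add: field_simps)
  then have "poly (map_poly of_int (pp_cyclotomic p k)) (exp (2 * pi * \<i> / of_nat (p ^ Suc k)))
      = (\<Sum>v<p. \<zeta> ^ v)"
    by (simp add: pp_cyclotomic_def map_poly_of_int_sum map_poly_monom poly_sum poly_monom)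
  moreover have "\<zeta> ^ p = 1"
    using \<open>p > 0\<close> by (simp add: \<zeta>_def flip: exp_of_nat_mult)
  then have "(\<zeta> - 1) * (\<Sum>v<p. \<zeta> ^ v) = 0"
    by (simp add: power_diff_1_eq[symmetric])
  moreover have "\<zeta> \<noteq> 1"
    unfolding \<zeta>_def using assms by (intro exp_2pi_i_div_neq_1 prime_ge_2_nat)
  ultimately show ?thesis
    by simp
qed

lemma coeff_pp_cyclotomic_mult:
  assumes "degree q < p ^ k" "r < p ^ k" "v < p"
  shows "coeff (pp_cyclotomic p k * q) (r + v * p ^ k) = coeff q r"
proof -
  have "coeff (monom 1 (w * p ^ k) * q) (r + v * p ^ k) = (if w = v then coeff q r else 0)" for w
  proof (cases rule: linorder_cases[of w v])
    case less
    then have "Suc w * p ^ k \<le> v * p ^ k"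
      by (intro mult_le_mono1) simp
    then have "r + v * p ^ k - w * p ^ k \<ge> p ^ k"
      by simp
    then show ?thesis
      using less assms(1) by (auto simp: coeff_monom_mult intro!: coeff_eq_0)
  next
    case greater
    then have "Suc v * p ^ k \<le> w * p ^ k"
      by (intro mult_le_mono1) simp
    then have "r + v * p ^ k < w * p ^ k"
      using assms(2) by simp
    then show ?thesis
      using greater by (simp add: coeff_monom_mult)
  qed (simp add: coeff_monom_mult)
  then show ?thesis
    using assms(3) by (simp add: pp_cyclotomic_def sum_distrib_right coeff_sum)
qed

lemma coeff_periodic_if_root_of_unity:
  fixes f :: "int poly"
  assumes p: "prime p" and deg: "degree f < p ^ Suc k"
    and root: "poly (map_poly of_int f) (exp (2 * pi * \<i> / of_nat (p ^ Suc k))) = 0"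
    and "r < p ^ k" "v < p"
  shows "coeff f (r + v * p ^ k) = coeff f r"
proof -
  have "p > 0"
    using p by (simp add: prime_gt_0_nat)
  have "pp_cyclotomic p k dvd f"
    using irreducible_imp_prime_poly[OF pp_cyclotomic_irreducible[OF p]]
      monic_pp_cyclotomic[OF \<open>p > 0\<close>] pp_cyclotomic_root[OF p] root
    by (rule monic_prime_poly_dvd_if_common_root)
  then obtain q where f: "f = pp_cyclotomic p k * q" ..
  have "degree q < p ^ k"
  proof (cases "q = 0")
    case False
    have "pp_cyclotomic p k \<noteq> 0"
      using monic_pp_cyclotomic[OF \<open>p > 0\<close>, of k] by auto
    then have "(p - 1) * p ^ k + degree q < p * p ^ k"
      using deg False by (simp add: f degree_mult_eq degree_pp_cyclotomic[OF \<open>p > 0\<close>])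
    then show ?thesis
      using \<open>p > 0\<close> by (simp add: diff_mult_distrib)
  qed (simp add: \<open>p > 0\<close>)
  then show ?thesis
    using coeff_pp_cyclotomic_mult[of q p k r v] coeff_pp_cyclotomic_mult[of q p k r 0]
      assms(4,5) \<open>p > 0\<close> by (simp add: f)
qed

lemma card_multiples_if_sum_root_of_unity_eq_0:
  fixes J :: "'a \<Rightarrow> nat"
  assumes p: "prime p" and "finite A" and J: "\<And>a. a \<in> A \<Longrightarrow> J a < p ^ Suc k"
    and sum0: "(\<Sum>a\<in>A. exp (2 * pi * \<i> / of_nat (p ^ Suc k)) ^ J a) = 0"
  shows "card {a \<in> A. p ^ k dvd J a} = p * card {a \<in> A. J a = 0}"
proof -
  define N where "N = p ^ Suc k"
  define c where "c i = card {a \<in> A. J a = i}" for i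
  define f where "f = (\<Sum>i<N. monom (int (c i)) i)"
  have coeff_f: "coeff f i = (if i < N then int (c i) else 0)" for i
    by (simp add: f_def coeff_sum coeff_monom)
  have "degree f < N"
  proof -
    have "N > 0"
      using p by (simp add: N_def prime_gt_0_nat)
    moreover have "degree f \<le> N - 1"
      by (rule degree_le) (auto simp: coeff_f)
    ultimately show ?thesis
      by linarith
  qed
  have "poly (map_poly of_int f) (exp (2 * pi * \<i> / of_nat N))
      = (\<Sum>i<N. \<Sum>a\<in>{a \<in> A. J a = i}. exp (2 * pi * \<i> / of_nat N) ^ J a)"
    by (simp add: f_def c_def map_poly_of_int_sum map_poly_monom poly_sum poly_monom)
  also have "\<dots> = 0"
    using sum0 \<open>finite A\<close> J by (subst sum.group) (auto simp: N_def)
  finally have periodic: "c (v * p ^ k) = c 0" if "v < p" for v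
    using coeff_periodic_if_root_of_unity[OF p \<open>degree f < N\<close>[unfolded N_def], of 0 v] that
    by (simp add: N_def coeff_f)
  define S where "S = {a \<in> A. p ^ k dvd J a}"
  have "J ` S \<subseteq> (\<lambda>v. v * p ^ k) ` {..<p}"
  proof
    fix y assume "y \<in> J ` S"
    then obtain a where "a \<in> A" "p ^ k dvd J a" "y = J a"
      by (auto simp: S_def)
    moreover from \<open>p ^ k dvd J a\<close> obtain v where "J a = v * p ^ k"
      by (metis dvd_def mult.commute)
    moreover have "v < p"
      using J[OF \<open>a \<in> A\<close>] \<open>J a = v * p ^ k\<close> by simp
    ultimately show "y \<in> (\<lambda>v. v * p ^ k) ` {..<p}"
      by auto
  qed
  then have "card S = (\<Sum>y\<in>(\<lambda>v. v * p ^ k) ` {..<p}. card {a \<in> S. J a = y})"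
    using \<open>finite A\<close> sum.group[of S _ J "\<lambda>_. 1 :: nat"] by (simp add: S_def)
  also have "\<dots> = (\<Sum>v<p. c (v * p ^ k))"
    using p by (subst sum.reindex)
      (auto simp: inj_on_def S_def c_def prime_gt_0_nat intro!: sum.cong arg_cong[where f = card])
  also have "\<dots> = p * c 0"
    using periodic by simp
  finally show ?thesis
    by (simp add: S_def c_def)
qed

lemma zn2_smult_eq_0_iff:
  "zn2_smult n k x = (0, 0) \<longleftrightarrow> int n dvd k * fst x \<and> int n dvd k * snd x"
  by (simp add: zn2_smult_def dvd_eq_mod_eq_0)

lemma zn2_smult_eq_0_iff_ord_dvd:
  assumes "x \<in> zn2 n"
  shows "zn2_smult n k x = (0, 0) \<longleftrightarrow> int (zn2_ord n x) dvd k"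
proof -
  define Z where "Z k \<longleftrightarrow> int n dvd k * fst x \<and> int n dvd k * snd x" for k
  have Z_mult: "Z (k * l)" if "Z k" for k l
    using that unfolding Z_def by (metis dvd_mult mult.assoc mult.commute)
  have Z_diff: "Z (k - l)" if "Z k" "Z l" for k l
    using that by (auto simp: Z_def left_diff_distrib)
  define N where "N = zn2_ord n x"
  have "n > 0"
    using assms by (auto simp: zn2_def)
  then have "Z (int n)"
    by (simp add: Z_def)
  then have "N > 0" "Z (int N)" and N_least: "\<And>l. 0 < l \<Longrightarrow> Z (int l) \<Longrightarrow> N \<le> l"
    unfolding N_def zn2_ord_def zn2_smult_eq_0_iff Z_def[symmetric]
    using \<open>n > 0\<close> by (auto intro: LeastI2[of _ n] Least_le)
  have "Z k \<longleftrightarrow> int N dvd k"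
  proof
    assume "Z k"
    have "Z (k mod int N)"
      using Z_diff[OF \<open>Z k\<close> Z_mult[OF \<open>Z (int N)\<close>, of "k div int N"]]
      by (simp only: minus_mult_div_eq_mod)
    moreover have "k mod int N < int N"
      using \<open>N > 0\<close> by simp
    ultimately have "\<not> 0 < k mod int N"
      using N_least[of "nat (k mod int N)"] by auto
    then show "int N dvd k"
      unfolding dvd_eq_mod_eq_0 using \<open>N > 0\<close> pos_mod_sign[of "int N" k] by linarith
  next
    assume "int N dvd k"
    then show "Z k"
      using Z_mult[OF \<open>Z (int N)\<close>] by (auto elim!: dvdE)
  qed
  then show ?thesis
    by (simp add: zn2_smult_eq_0_iff Z_def N_def)
qed

lemma symp_smult: "symp n g (zn2_smult n k y) = (k * symp n g y) mod int n"
proof -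
  have "symp n g (zn2_smult n k y)
      = (fst g * ((k * snd y) mod int n) - snd g * ((k * fst y) mod int n)) mod int n"
    by (simp add: symp_def zn2_smult_def)
  also have "\<dots> = (fst g * (k * snd y) - snd g * (k * fst y)) mod int n"
    by (rule mod_diff_cong) (simp_all add: mod_mult_right_eq)
  also have "\<dots> = (k * (fst g * snd y - snd g * fst y)) mod int n"
    by (simp add: algebra_simps)
  finally show ?thesis
    by (simp add: symp_def mod_mult_right_eq)
qed

lemma sperp_cyc_iff: "g \<in> sperp n (cyc n y) \<longleftrightarrow> g \<in> zn2 n \<and> symp n g y = 0"
proof -
  have "(\<forall>h\<in>cyc n y. symp n g h = 0) \<longleftrightarrow> (\<forall>k. symp n g (zn2_smult n k y) = 0)"
    unfolding cyc_def by blast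
  also have "\<dots> \<longleftrightarrow> (\<forall>k. (k * symp n g y) mod int n = 0)"
    by (simp only: symp_smult)
  also have "\<dots> \<longleftrightarrow> symp n g y = 0"
    by (metis mod_mod_trivial mult_1 mult_zero_right mod_0 symp_def)
  finally show ?thesis
    by (simp add: sperp_def)
qed

lemma zn2_ord_cofactor:
  assumes "x \<in> zn2 n"
  shows "n = zn2_ord n x * (n div zn2_ord n x)" and "n div zn2_ord n x > 0"
proof -
  have "zn2_ord n x dvd n"
    using zn2_smult_eq_0_iff_ord_dvd[OF assms, of "int n"] by (simp add: zn2_smult_eq_0_iff)
  then show "n = zn2_ord n x * (n div zn2_ord n x)"
    by simp
  moreover have "n > 0"
    using assms by (auto simp: zn2_def)
  ultimately show "n div zn2_ord n x > 0"
    by (metis mult_0_right neq0_conv)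
qed

(* <a, x>_s is a multiple of n / ord x (lemma symp_level); this is the multiplier. *)
definition symp_level :: "nat \<Rightarrow> int \<times> int \<Rightarrow> int \<times> int \<Rightarrow> nat" where
  "symp_level n x a = nat (symp n a x div int (n div zn2_ord n x))"

lemma symp_level:
  assumes x: "x \<in> zn2 n"
  shows "symp n a x = int (n div zn2_ord n x) * int (symp_level n x a)"
    and "symp_level n x a < zn2_ord n x"
proof -
  define N where "N = zn2_ord n x"
  define e where "e = n div N"
  define s where "s = symp n a x"
  have s: "0 \<le> s" "s < int n"
    using x by (auto simp: s_def symp_def zn2_def)
  have n: "int n = int N * int e" and "e > 0"
    using zn2_ord_cofactor[OF x] by (simp_all add: N_def e_def flip: of_nat_mult)
  have "(int N * s) mod int n = symp n a (zn2_smult n (int N) x)"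
    by (simp add: s_def symp_smult)
  also have "\<dots> = 0"
    using zn2_smult_eq_0_iff_ord_dvd[OF x, of "int N"] by (simp add: N_def symp_def)
  finally have "int N * int e dvd int N * s"
    by (simp add: n dvd_eq_mod_eq_0)
  then obtain t where t: "s = int e * t"
    using \<open>e > 0\<close> n s by (auto elim!: dvdE)
  then have "0 \<le> t" "t < int N"
    using s \<open>e > 0\<close> by (simp_all add: n zero_le_mult_iff mult.commute[of "int N"])
  then show "symp n a x = int (n div zn2_ord n x) * int (symp_level n x a)"
    and "symp_level n x a < zn2_ord n x"
    using t \<open>e > 0\<close> by (simp_all add: symp_level_def flip: s_def e_def N_def)
qed

lemma symp_smult_eq_0_iff_level:
  assumes x: "x \<in> zn2 n"
  shows "symp n a (zn2_smult n k x) = 0 \<longleftrightarrow> int (zn2_ord n x) dvd k * int (symp_level n x a)"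
proof -
  define N where "N = zn2_ord n x"
  define e where "e = n div N"
  have n: "int n = int N * int e" and "e > 0"
    using zn2_ord_cofactor[OF x] by (simp_all add: N_def e_def flip: of_nat_mult)
  have "symp n a (zn2_smult n k x) = (int e * (k * int (symp_level n x a))) mod (int N * int e)"
    by (simp add: symp_smult symp_level(1)[OF x] n mult_ac flip: e_def N_def)
  then show ?thesis
    using \<open>e > 0\<close> by (simp add: dvd_eq_mod_eq_0[symmetric] N_def mult.commute[of _ "int e"])
qed

lemma symp_eq_0_iff_level:
  assumes "x \<in> zn2 n"
  shows "symp n a x = 0 \<longleftrightarrow> symp_level n x a = 0"
  using symp_level(1)[OF assms, of a] zn2_ord_cofactor(2)[OF assms] by simp

lemma exp_symp_eq_power:
  assumes "x \<in> zn2 n"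
  shows "exp (2 * pi * \<i> * of_int (symp n a x) / of_nat n)
    = exp (2 * pi * \<i> / of_nat (zn2_ord n x)) ^ symp_level n x a"
proof -
  define N where "N = zn2_ord n x"
  define e where "e = n div N"
  have n: "of_nat n = (of_nat N * of_nat e :: complex)" and "e > 0"
    using zn2_ord_cofactor[OF assms] by (simp_all add: N_def e_def flip: of_nat_mult)
  have "2 * pi * \<i> * of_int (symp n a x) / of_nat n
      = of_nat (symp_level n x a) * (2 * pi * \<i> / of_nat N)"
    using \<open>e > 0\<close> by (simp add: symp_level(1)[OF assms] n flip: e_def N_def)
  then show ?thesis
    by (simp only: N_def exp_of_nat_mult)
qed

theorem mainTheorem1:
  fixes n p m :: nat and x :: "int \<times> int" and A :: "(int \<times> int) set"
  assumes "prime p" and "0 < m"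
    and "x \<in> zn2 n" and "zn2_ord n x = p ^ m"
    and "A \<subseteq> zn2 n"
    and "sym_fourier n A x = 0"
  shows "card (A \<inter> sperp n (cyc n (zn2_smult n (int p) x)))
           = p * card (A \<inter> sperp n (cyc n x))"
proof -
  let ?J = "symp_level n x"
  have m: "p ^ m = p * p ^ (m - 1)"
    using \<open>0 < m\<close> by (simp flip: power_Suc)
  have "A \<inter> sperp n (cyc n (zn2_smult n (int p) x)) = {a \<in> A. p ^ (m - 1) dvd ?J a}"
    using assms(1,3,4,5)
    by (auto simp: sperp_cyc_iff symp_smult_eq_0_iff_level m prime_gt_0_nat simp flip: of_nat_mult)
  moreover have "A \<inter> sperp n (cyc n x) = {a \<in> A. ?J a = 0}"
    using assms(3,5) by (auto simp: sperp_cyc_iff symp_eq_0_iff_level)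
  moreover have "finite A"
    using assms(5) by (rule finite_subset) (simp add: zn2_def)
  moreover have "?J a < p ^ Suc (m - 1)" for a
    using symp_level(2)[OF assms(3), of a] assms(4) \<open>0 < m\<close> by simp
  moreover have "sym_fourier n A x = (\<Sum>a\<in>A. exp (2 * pi * \<i> / of_nat (zn2_ord n x)) ^ ?J a)"
    unfolding sym_fourier_def using exp_symp_eq_power[OF assms(3)] by simp
  ultimately show ?thesis
    using card_multiples_if_sum_root_of_unity_eq_0[OF \<open>prime p\<close>, of A ?J "m - 1"]
      assms(4,6) \<open>0 < m\<close> by simp
qed

end
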